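(* Let $G$ be a $(2K_2, K_1+P_4)$-free graph. Then $\chi(G)\le \omega(G)+2$.
   Context: All graphs are finite, simple and undirected. $P_n$, $K_n$ denote the path and complete graph on $n$ vertices; $2K_2$ is the disjoint union of two copies of $K_2$; $G_1+G_2$ denotes the join of $G_1$ and $G_2$ (disjoint union plus all edges between them), so $K_1+P_4$ is a vertex adjacent to all vertices of an induced $P_4$. A graph is $\mathcal F$-free if it has no induced subgraph isomorphic to a member of $\mathcal F$. $\chi(G)$ is the chromatic number and $\omega(G)$ the clique number. *)

theory Defs
  imports Main
begin

definition simple_graph :: "'a set \<Rightarrow> ('a \<Rightarrow> 'a \<Rightarrow> bool) \<Rightarrow> bool" where
  "simple_graph V E \<longleftrightarrow> finite V \<and> (\<forall>x y. E x y \<longrightarrow> x \<in> V \<and> y \<in> V)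
     \<and> (\<forall>x y. E x y \<longrightarrow> E y x) \<and> (\<forall>x. \<not> E x x)"

definition has_induced :: "'a set \<Rightarrow> ('a \<Rightarrow> 'a \<Rightarrow> bool) \<Rightarrow> nat \<Rightarrow> (nat \<Rightarrow> nat \<Rightarrow> bool) \<Rightarrow> bool" where
  "has_induced V E n HE \<longleftrightarrow> (\<exists>f. inj_on f {..<n} \<and> f ` {..<n} \<subseteq> V \<and>
     (\<forall>i<n. \<forall>j<n. E (f i) (f j) \<longleftrightarrow> HE i j))"

definition twoK2 :: "nat \<Rightarrow> nat \<Rightarrow> bool" where
  "twoK2 i j \<longleftrightarrow> {i, j} = {0, 1} \<or> {i, j} = {2, 3}"

definition K1_join_P4 :: "nat \<Rightarrow> nat \<Rightarrow> bool" where
  "K1_join_P4 i j \<longleftrightarrow> {i, j} = {0, 1} \<or> {i, j} = {1, 2} \<or> {i, j} = {2, 3}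
     \<or> (i = 4 \<and> j < 4) \<or> (j = 4 \<and> i < 4)"

definition proper_colouring :: "'a set \<Rightarrow> ('a \<Rightarrow> 'a \<Rightarrow> bool) \<Rightarrow> nat \<Rightarrow> ('a \<Rightarrow> nat) \<Rightarrow> bool" where
  "proper_colouring V E k c \<longleftrightarrow> c ` V \<subseteq> {..<k} \<and> (\<forall>x y. E x y \<longrightarrow> c x \<noteq> c y)"

definition chromatic_number :: "'a set \<Rightarrow> ('a \<Rightarrow> 'a \<Rightarrow> bool) \<Rightarrow> nat" where
  "chromatic_number V E = (LEAST k. \<exists>c. proper_colouring V E k c)"

definition is_clique :: "'a set \<Rightarrow> ('a \<Rightarrow> 'a \<Rightarrow> bool) \<Rightarrow> 'a set \<Rightarrow> bool" where
  "is_clique V E K \<longleftrightarrow> K \<subseteq> V \<and> (\<forall>x\<in>K. \<forall>y\<in>K. x \<noteq> y \<longrightarrow> E x y)"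

definition clique_number :: "'a set \<Rightarrow> ('a \<Rightarrow> 'a \<Rightarrow> bool) \<Rightarrow> nat" where
  "clique_number V E = Max (card ` {K. is_clique V E K})"

end

theory Submission imports Defs begin

text \<open>Fix a maximum clique \<open>K\<close> and two of its vertices \<open>k\<^sub>1 \<noteq> k\<^sub>2\<close>. Every vertex outside \<open>K\<close>
  misses some vertex of \<open>K\<close>. Vertices of \<open>K\<close> get distinct colours; a vertex outside \<open>K\<close> gets
  the colour of a clique vertex it misses, except when it misses \<open>k\<^sub>1\<close> and some other clique
  vertex, in which case it gets one of two new colours according to whether it misses \<open>k\<^sub>2\<close>.
  Two adjacent vertices miss at most one common clique vertex (else a \<open>2K\<^sub>2\<close>), and if they
  miss a common one and one of them misses another, then every clique vertex is missed by
  one of them (else a gem \<open>K\<^sub>1 + P\<^sub>4\<close>); this makes the colouring proper. If \<open>K\<close> has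
  fewer than two vertices, the graph has no edges.\<close>

lemma simple_graph_sym: "simple_graph V E \<Longrightarrow> E x y \<Longrightarrow> E y x"
  and simple_graph_irrefl: "simple_graph V E \<Longrightarrow> \<not> E x x"
  and simple_graph_in_vertices: "simple_graph V E \<Longrightarrow> E x y \<Longrightarrow> x \<in> V \<and> y \<in> V"
  by (auto simp: simple_graph_def)

lemma has_induced_twoK2I:
  assumes "simple_graph V E" and "E a b" "E c d"
    and "\<not> E a c" "\<not> E a d" "\<not> E b c" "\<not> E b d"
  shows "has_induced V E 4 twoK2"
  unfolding has_induced_def
proof (intro exI conjI)
  note graph = simple_graph_sym[OF assms(1)] simple_graph_irrefl[OF assms(1)]
    simple_graph_in_vertices[OF assms(1)]
  have "distinct [a, b, c, d]" using assms graph by auto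
  then show "inj_on (\<lambda>i. [a, b, c, d] ! i) {..<4}"
    by (auto simp: inj_on_def lessThan_def less_Suc_eq numeral_eq_Suc nth_eq_iff_index_eq)
  show "(\<lambda>i. [a, b, c, d] ! i) ` {..<4} \<subseteq> V"
    using assms graph by (auto simp: less_Suc_eq numeral_eq_Suc)
  show "\<forall>i<4. \<forall>j<4. E ([a, b, c, d] ! i) ([a, b, c, d] ! j) = twoK2 i j"
    using assms graph by (auto simp: twoK2_def less_Suc_eq numeral_eq_Suc doubleton_eq_iff)
qed

lemma has_induced_K1_join_P4I:
  assumes "simple_graph V E" and "E a b" "E b c" "E c d"
    and "\<not> E a c" "\<not> E a d" "\<not> E b d"
    and "E e a" "E e b" "E e c" "E e d"
  shows "has_induced V E 5 K1_join_P4"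
  unfolding has_induced_def
proof (intro exI conjI)
  note graph = simple_graph_sym[OF assms(1)] simple_graph_irrefl[OF assms(1)]
    simple_graph_in_vertices[OF assms(1)]
  have "distinct [a, b, c, d, e]" using assms graph by auto
  then show "inj_on (\<lambda>i. [a, b, c, d, e] ! i) {..<5}"
    by (auto simp: inj_on_def lessThan_def less_Suc_eq numeral_eq_Suc nth_eq_iff_index_eq)
  show "(\<lambda>i. [a, b, c, d, e] ! i) ` {..<5} \<subseteq> V"
    using assms graph by (auto simp: less_Suc_eq numeral_eq_Suc)
  show "\<forall>i<5. \<forall>j<5. E ([a, b, c, d, e] ! i) ([a, b, c, d, e] ! j) = K1_join_P4 i j"
    using assms graph by (auto simp: K1_join_P4_def less_Suc_eq numeral_eq_Suc doubleton_eq_iff)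
qed

lemma finite_cliques: "finite V \<Longrightarrow> finite {K. is_clique V E K}"
  by (rule finite_subset[of _ "Pow V"]) (auto simp: is_clique_def)

lemma card_clique_le_clique_number:
  "finite V \<Longrightarrow> is_clique V E K \<Longrightarrow> card K \<le> clique_number V E"
  unfolding clique_number_def by (rule Max_ge) (auto intro: finite_cliques)

lemma ex_maximum_clique:
  assumes "finite V"
  obtains K where "is_clique V E K" and "card K = clique_number V E"
proof -
  have "is_clique V E {}" by (simp add: is_clique_def)
  then have "clique_number V E \<in> card ` {K. is_clique V E K}"
    unfolding clique_number_def using finite_cliques[OF assms] by (intro Max_in) auto
  then show thesis using that by auto
qed

lemma edge_is_clique: "simple_graph V E \<Longrightarrow> E x y \<Longrightarrow> is_clique V E {x, y}"
  by (auto simp: is_clique_def simple_graph_def)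

lemma chromatic_number_le: "proper_colouring V E k c \<Longrightarrow> chromatic_number V E \<le> k"
  unfolding chromatic_number_def by (rule Least_le) blast

locale maximum_clique =
  fixes V :: "'a set" and E :: "'a \<Rightarrow> 'a \<Rightarrow> bool" and K :: "'a set"
  assumes graph: "simple_graph V E"
    and clique: "is_clique V E K"
    and card_clique: "card K = clique_number V E"
begin

definition misses :: "'a \<Rightarrow> 'a set" where
  "misses v = {x \<in> K. \<not> E v x}"

lemma finite_V: "finite V" and finite_K: "finite K"
  using graph clique finite_subset by (auto simp: simple_graph_def is_clique_def)

lemma sym: "E x y \<Longrightarrow> E y x"
  and irrefl: "\<not> E x x"
  and in_vertices: "E x y \<Longrightarrow> x \<in> V \<and> y \<in> V"
  using graph by (auto simp: simple_graph_def)

lemma clique_adjacent: "x \<in> K \<Longrightarrow> y \<in> K \<Longrightarrow> x \<noteq> y \<Longrightarrow> E x y"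
  using clique by (auto simp: is_clique_def)

lemma misses_subset: "misses v \<subseteq> K"
  by (auto simp: misses_def)

lemma misses_nonempty:
  assumes "v \<in> V" and "v \<notin> K"
  shows "misses v \<noteq> {}"
proof
  assume "misses v = {}"
  then have "is_clique V E (insert v K)"
    using assms clique sym by (auto simp: is_clique_def misses_def)
  then have "card (insert v K) \<le> card K"
    using card_clique card_clique_le_clique_number[OF finite_V] by simp
  with assms finite_K show False by simp
qed

lemma adjacent_misses_not_same_singleton:
  assumes "E u w" and "u \<notin> K" and "w \<notin> K"
    and "misses u = {z}" and "misses w = {z}"
  shows False
proof -
  have "z \<in> K" using assms(4) misses_subset by auto
  have "is_clique V E (insert u (insert w (K - {z})))"
    using assms clique sym in_vertices by (auto simp: is_clique_def misses_def)
  then have "card (insert u (insert w (K - {z}))) \<le> card K"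
    using card_clique card_clique_le_clique_number[OF finite_V] by simp
  moreover have "u \<noteq> w" using assms(1) irrefl by auto
  ultimately show False using assms(2,3) \<open>z \<in> K\<close> finite_K by (simp add: card_Diff_singleton)
qed

end

locale free_maximum_clique = maximum_clique +
  assumes no_2K2: "\<not> has_induced V E 4 twoK2"
    and no_gem: "\<not> has_induced V E 5 K1_join_P4"
begin

lemma adjacent_common_misses_unique:
  assumes "E u w" and "x \<in> misses u" "x \<in> misses w" and "z \<in> misses u" "z \<in> misses w"
  shows "x = z"
proof (rule ccontr)
  assume "x \<noteq> z"
  then have "has_induced V E 4 twoK2"
    using assms clique_adjacent by (intro has_induced_twoK2I[OF graph, of u w x z]) (auto simp: misses_def)
  with no_2K2 show False ..
qed

lemma adjacent_misses_cover:
  assumes "E u w" and "z \<in> misses u" "z \<in> misses w" and "x \<in> misses u" "x \<noteq> z"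
  shows "K \<subseteq> misses u \<union> misses w"
proof
  fix y assume "y \<in> K"
  have "x \<notin> misses w" using adjacent_common_misses_unique assms by blast
  show "y \<in> misses u \<union> misses w"
  proof (rule ccontr)
    assume "y \<notin> misses u \<union> misses w"
    then have "has_induced V E 5 K1_join_P4"
      using assms \<open>x \<notin> misses w\<close> \<open>y \<in> K\<close> clique_adjacent sym
      by (intro has_induced_K1_join_P4I[OF graph, of z x w u y]) (auto simp: misses_def)
    with no_gem show False ..
  qed
qed

lemma adjacent_common_miss_singleton:
  assumes "k \<in> K" and "E u w" and "\<not> {k} \<subset> misses u" "\<not> {k} \<subset> misses w"
    and "z \<in> misses u" "z \<in> misses w"
  shows "misses u = {z}"
proof (rule ccontr)
  assume "misses u \<noteq> {z}"
  with assms(5) obtain x where x: "x \<in> misses u" "x \<noteq> z" by blast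
  then have "k \<in> misses u \<union> misses w"
    using adjacent_misses_cover assms by blast
  then show False
    using assms x by (auto simp: psubset_eq)
qed

lemma adjacent_misses_disjoint:
  assumes "k \<in> K" and "E u w" and "u \<notin> K" "w \<notin> K"
    and "\<not> {k} \<subset> misses u" "\<not> {k} \<subset> misses w"
  shows "misses u \<inter> misses w = {}"
proof (rule ccontr)
  assume "misses u \<inter> misses w \<noteq> {}"
  then obtain z where "z \<in> misses u" "z \<in> misses w" by blast
  then have "misses u = {z}" and "misses w = {z}"
    using adjacent_common_miss_singleton assms sym by blast+
  then show False using adjacent_misses_not_same_singleton assms by blast
qed

lemma adjacent_exactly_one_misses:
  assumes "k\<^sub>2 \<in> K" "k\<^sub>1 \<noteq> k\<^sub>2" and "E u w"
    and "{k\<^sub>1} \<subset> misses u" "{k\<^sub>1} \<subset> misses w"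
  shows "k\<^sub>2 \<in> misses u \<longleftrightarrow> k\<^sub>2 \<notin> misses w"
proof -
  have "k\<^sub>1 \<in> misses u" "k\<^sub>1 \<in> misses w" using assms(4,5) by auto
  obtain x where "x \<in> misses u" "x \<noteq> k\<^sub>1" using assms(4) by auto
  then have "k\<^sub>2 \<in> misses u \<union> misses w"
    using adjacent_misses_cover assms(1,3) \<open>k\<^sub>1 \<in> misses u\<close> \<open>k\<^sub>1 \<in> misses w\<close> by blast
  moreover have "\<not> (k\<^sub>2 \<in> misses u \<and> k\<^sub>2 \<in> misses w)"
    using adjacent_common_misses_unique assms(2,3) \<open>k\<^sub>1 \<in> misses u\<close> \<open>k\<^sub>1 \<in> misses w\<close> by blast
  ultimately show ?thesis by blast
qed

end

locale clique_colouring = free_maximum_clique +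
  fixes k\<^sub>1 k\<^sub>2 :: 'a and idx :: "'a \<Rightarrow> nat"
  assumes k\<^sub>1: "k\<^sub>1 \<in> K" and k\<^sub>2: "k\<^sub>2 \<in> K" and k\<^sub>1_neq_k\<^sub>2: "k\<^sub>1 \<noteq> k\<^sub>2"
    and idx: "bij_betw idx K {0..<card K}"
begin

definition pick :: "'a \<Rightarrow> 'a" where
  "pick v = (SOME z. z \<in> misses v)"

definition colour :: "'a \<Rightarrow> nat" where
  "colour v =
    (if v \<in> K then idx v
     else if {k\<^sub>1} \<subset> misses v then (if k\<^sub>2 \<in> misses v then card K else card K + 1)
     else idx (pick v))"

lemma idx_less: "x \<in> K \<Longrightarrow> idx x < card K"
  using idx by (auto simp: bij_betw_def)

lemma idx_inject: "x \<in> K \<Longrightarrow> y \<in> K \<Longrightarrow> idx x = idx y \<Longrightarrow> x = y"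
  using idx by (auto simp: bij_betw_def inj_on_def)

lemma pick_in_misses: "v \<in> V \<Longrightarrow> v \<notin> K \<Longrightarrow> pick v \<in> misses v"
  unfolding pick_def some_in_eq by (rule misses_nonempty)

lemma pick_in_clique: "v \<in> V \<Longrightarrow> v \<notin> K \<Longrightarrow> pick v \<in> K"
  using pick_in_misses misses_subset by blast

lemma colour_clique: "v \<in> K \<Longrightarrow> colour v = idx v"
  and colour_special: "v \<notin> K \<Longrightarrow> {k\<^sub>1} \<subset> misses v \<Longrightarrow>
    colour v = (if k\<^sub>2 \<in> misses v then card K else card K + 1)"
  and colour_ordinary: "v \<notin> K \<Longrightarrow> \<not> {k\<^sub>1} \<subset> misses v \<Longrightarrow> colour v = idx (pick v)"
  by (simp_all add: colour_def)

lemma colour_less: "v \<in> V \<Longrightarrow> colour v < card K + 2"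
  using idx_less pick_in_clique by (cases "v \<in> K") (auto simp: colour_def less_SucI)

lemma colour_clique_outside:
  assumes "a \<in> K" "b \<notin> K" "E a b"
  shows "colour a \<noteq> colour b"
proof (cases "{k\<^sub>1} \<subset> misses b")
  case True
  then show ?thesis using colour_clique[OF assms(1)] idx_less[OF assms(1)] colour_special[OF assms(2)] by simp
next
  case False
  have "b \<in> V" using assms(3) in_vertices by blast
  then have "pick b \<noteq> a" using pick_in_misses[OF _ assms(2)] assms(3) sym by (auto simp: misses_def)
  then show ?thesis
    using colour_clique[OF assms(1)] colour_ordinary[OF assms(2) False]
      idx_inject[OF assms(1) pick_in_clique[OF \<open>b \<in> V\<close> assms(2)]] by auto
qed

lemma colour_outside_outside:
  assumes "u \<notin> K" "w \<notin> K" "E u w"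
  shows "colour u \<noteq> colour w"
proof -
  have "u \<in> V" "w \<in> V" using assms(3) in_vertices by blast+
  show ?thesis
  proof (cases "{k\<^sub>1} \<subset> misses u"; cases "{k\<^sub>1} \<subset> misses w")
    assume special: "{k\<^sub>1} \<subset> misses u" "{k\<^sub>1} \<subset> misses w"
    have "k\<^sub>2 \<in> misses u \<longleftrightarrow> k\<^sub>2 \<notin> misses w"
      using adjacent_exactly_one_misses[OF k\<^sub>2 k\<^sub>1_neq_k\<^sub>2 assms(3) special] .
    then show ?thesis
      using colour_special[OF assms(1) special(1)] colour_special[OF assms(2) special(2)] by simp
  next
    assume "{k\<^sub>1} \<subset> misses u" "\<not> {k\<^sub>1} \<subset> misses w"
    with assms show ?thesis
      using colour_special colour_ordinary idx_less[OF pick_in_clique[OF \<open>w \<in> V\<close> assms(2)]] by simp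
  next
    assume "\<not> {k\<^sub>1} \<subset> misses u" "{k\<^sub>1} \<subset> misses w"
    with assms show ?thesis
      using colour_special colour_ordinary idx_less[OF pick_in_clique[OF \<open>u \<in> V\<close> assms(1)]] by simp
  next
    assume ordinary: "\<not> {k\<^sub>1} \<subset> misses u" "\<not> {k\<^sub>1} \<subset> misses w"
    have "misses u \<inter> misses w = {}"
      using adjacent_misses_disjoint[OF k\<^sub>1 assms(3,1,2) ordinary] .
    then have "pick u \<noteq> pick w"
      using pick_in_misses[OF \<open>u \<in> V\<close> assms(1)] pick_in_misses[OF \<open>w \<in> V\<close> assms(2)] by auto
    then show ?thesis
      using colour_ordinary[OF assms(1) ordinary(1)] colour_ordinary[OF assms(2) ordinary(2)]
        idx_inject[OF pick_in_clique[OF \<open>u \<in> V\<close> assms(1)] pick_in_clique[OF \<open>w \<in> V\<close> assms(2)]]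
      by auto
  qed
qed

lemma proper_colouring_colour: "proper_colouring V E (card K + 2) colour"
  unfolding proper_colouring_def
proof (intro conjI allI impI)
  show "colour ` V \<subseteq> {..<card K + 2}" using colour_less by auto
  fix u w assume uw: "E u w"
  show "colour u \<noteq> colour w"
  proof (cases "u \<in> K"; cases "w \<in> K")
    assume "u \<in> K" "w \<in> K"
    moreover have "u \<noteq> w" using uw irrefl by blast
    ultimately show ?thesis using idx_inject colour_clique by metis
  next
    assume "u \<in> K" "w \<notin> K"
    then show ?thesis using colour_clique_outside uw by blast
  next
    assume "u \<notin> K" "w \<in> K"
    then show ?thesis using colour_clique_outside[of w u] sym[OF uw] by argo
  next
    assume "u \<notin> K" "w \<notin> K"
    then show ?thesis using colour_outside_outside uw by blast
  qed
qed

end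

theorem corollary3p2:
  fixes V :: "'a set" and E :: "'a \<Rightarrow> 'a \<Rightarrow> bool"
  assumes "simple_graph V E"
    and "\<not> has_induced V E 4 twoK2"
    and "\<not> has_induced V E 5 K1_join_P4"
  shows "chromatic_number V E \<le> clique_number V E + 2"
proof -
  have "finite V" using assms(1) by (simp add: simple_graph_def)
  then obtain K where K: "is_clique V E K" "card K = clique_number V E"
    by (rule ex_maximum_clique)
  then interpret free_maximum_clique V E K
    using assms by unfold_locales
  show ?thesis
  proof (cases "\<exists>k\<^sub>1\<in>K. \<exists>k\<^sub>2\<in>K. k\<^sub>1 \<noteq> k\<^sub>2")
    case True
    then obtain k\<^sub>1 k\<^sub>2 where "k\<^sub>1 \<in> K" "k\<^sub>2 \<in> K" "k\<^sub>1 \<noteq> k\<^sub>2" by blast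
    moreover obtain idx where "bij_betw idx K {0..<card K}"
      using ex_bij_betw_finite_nat[OF finite_K] by blast
    ultimately interpret clique_colouring V E K k\<^sub>1 k\<^sub>2 idx
      by unfold_locales
    show ?thesis
      using chromatic_number_le[OF proper_colouring_colour] K(2) by simp
  next
    case False
    have "\<not> E x y" for x y
    proof
      assume "E x y"
      then have "card {x, y} \<le> card K"
        using edge_is_clique[OF graph] card_clique_le_clique_number[OF finite_V] K(2) by metis
      moreover have "card K \<le> 1" using False finite_K by (auto simp: card_le_Suc0_iff_eq)
      ultimately show False using \<open>E x y\<close> irrefl by (cases "x = y") auto
    qed
    then have "proper_colouring V E (clique_number V E + 2) (\<lambda>_. 0)"
      by (auto simp: proper_colouring_def)
    then show ?thesis by (rule chromatic_number_le)
  qed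
qed

end
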